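(* Under the triangle scaling property with constant $G\ge1$, the iterates of acc-BPP3 satisfy, for every $k\ge0$ and every $\lambda\in\Lambda$, $$d(\lambda)-d(\lambda_{k+1})\le\frac{G\,D_h(\lambda,\lambda_0)}{S_k}=\frac{\theta_k^2\,G\,D_h(\lambda,\lambda_0)}{\eta_k},\qquad S_k=\sum_{j=0}^k\frac{\eta_j}{\theta_j}.$$
   Context: $\Lambda\subseteq\mathbb{R}^m$ closed convex, $d:\Lambda\to\mathbb{R}$ concave. $h$ strictly convex, continuously differentiable on $\Lambda$, $D_h(\lambda,\tilde\lambda)=h(\lambda)-h(\tilde\lambda)-\nabla h(\tilde\lambda)^\top(\lambda-\tilde\lambda)$. Triangle scaling property with constant $G$: $D_h((1-\theta)\lambda+\theta\lambda_1,(1-\theta)\lambda+\theta\lambda_2)\le G\theta^2D_h(\lambda_1,\lambda_2)$ for all $\lambda,\lambda_1,\lambda_2\in\Lambda$, $\theta\in[0,1]$. Algorithm acc-BPP3: given $\lambda_0\in\Lambda$, $v_0=\lambda_0$, $\theta_0=1$, $\eta_k>0$; for $k\ge0$: $y_k=\theta_kv_k+(1-\theta_k)\lambda_k$; $\lambda_{k+1}\in\arg\max_{\lambda\in\Lambda}\{d(\lambda)-\frac1{\eta_k}D_h(\lambda,y_k)\}$; $v_{k+1}\in\arg\max_{\lambda\in\Lambda}\big\{-GD_h(\lambda,\lambda_0)+\sum_{j=0}^k\frac{\eta_j}{\theta_j}\big(d(\lambda_{j+1})+\frac1{\eta_j}(\nabla h(\lambda_{j+1})-\nabla h(y_j))^\top(\lambda-\lambda_{j+1})\big)\big\}$;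 $\theta_{k+1}\in(0,1]$ is defined by $\frac{\eta_k}{\theta_k^2}=\frac{\eta_{k+1}}{\theta_{k+1}^2}-\frac{\eta_{k+1}}{\theta_{k+1}}$. All maximizers are assumed to exist. *)

theory Defs
  imports "HOL-Analysis.Analysis"
begin

definition strictly_convex_on :: "'a::real_vector set \<Rightarrow> ('a \<Rightarrow> real) \<Rightarrow> bool" where
  "strictly_convex_on S f \<longleftrightarrow> (\<forall>x\<in>S. \<forall>y\<in>S. x \<noteq> y \<longrightarrow>
     (\<forall>t::real. 0 < t \<and> t < 1 \<longrightarrow> f ((1 - t) *\<^sub>R x + t *\<^sub>R y) < (1 - t) * f x + t * f y))"

definition bregman :: "('a::real_inner \<Rightarrow> real) \<Rightarrow> ('a \<Rightarrow> 'a) \<Rightarrow> 'a \<Rightarrow> 'a \<Rightarrow> real" where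
  "bregman h gh x y = h x - h y - inner (gh y) (x - y)"

end

theory Submission
  imports Defs
begin

text \<open>
  An estimate-sequence argument. The linear models
  l_j(\<mu>) = d(\<lambda>_{j+1}) + \<langle>\<nabla>h(\<lambda>_{j+1}) - \<nabla>h(y_j), \<mu> - \<lambda>_{j+1}\<rangle> / \<eta>_j
  majorize the concave function d by optimality of the proximal step, and the recursion for
  \<theta> makes S_k = \<Sum>_{j\<le>k} \<eta>_j / \<theta>_j equal to \<eta>_k / \<theta>_k^2. By induction on k,
  - G D_h(\<mu>, \<lambda>_0) + \<Sum>_{j\<le>k} (\<eta>_j / \<theta>_j) l_j(\<mu>) \<le> S_k d(\<lambda>_{k+1})  for all \<mu> \<in> \<Lambda>.
  The left-hand side is maximized at v_{k+1} and drops by at least G D_h(\<mu>, v_{k+1}) away from it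
  (three-point property). In the induction step this drop absorbs, through the triangle scaling
  property and S_{k+1} \<theta>_{k+1}^2 = \<eta>_{k+1}, the Bregman distance incurred by evaluating the
  new model at (1 - \<theta>_{k+1}) \<lambda>_{k+1} + \<theta>_{k+1} \<mu>. Together with
  S_k d(\<mu>) \<le> \<Sum>_{j\<le>k} (\<eta>_j / \<theta>_j) l_j(\<mu>) this gives the rate.
\<close>

lemma strictly_convex_on_imp_convex_on:
  assumes "strictly_convex_on S f" and "convex S"
  shows "convex_on S f"
proof (rule convex_onI[OF _ \<open>convex S\<close>])
  fix t :: real and x y assume "0 < t" "t < 1" "x \<in> S" "y \<in> S"
  then show "f ((1 - t) *\<^sub>R x + t *\<^sub>R y) \<le> (1 - t) * f x + t * f y"
    using assms(1) unfolding strictly_convex_on_def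
    by (cases "x = y") (auto simp: algebra_simps intro: less_imp_le)
qed

lemma difference_quotient_tendsto_inner:
  fixes h :: "'a::real_inner \<Rightarrow> real"
  assumes hd: "(h has_derivative (\<lambda>u. inner u g)) (at x within S)"
    and "convex S" and "x \<in> S" and "z \<in> S"
  shows "((\<lambda>t. (h (x + t *\<^sub>R (z - x)) - h x) / t) \<longlongrightarrow> inner (z - x) g) (at_right 0)"
proof -
  define p where "p t = x + t *\<^sub>R (z - x)" for t :: real
  have p_deriv: "(p has_derivative (\<lambda>t. t *\<^sub>R (z - x))) (at 0 within {0..1})"
    unfolding p_def by (auto intro!: derivative_eq_intros)
  have "p ` {0..1} \<subseteq> S"
  proof
    fix w assume "w \<in> p ` {0..1}"
    then obtain t where "0 \<le> t" "t \<le> 1" "w = (1 - t) *\<^sub>R x + t *\<^sub>R z"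
      by (auto simp: p_def algebra_simps)
    then show "w \<in> S" using assms(2-4) by (simp add: convex_alt)
  qed
  then have "(h has_derivative (\<lambda>u. inner u g)) (at (p 0) within p ` {0..1})"
    using has_derivative_subset[OF hd] by (simp add: p_def)
  from diff_chain_within[OF p_deriv this]
  have "((h \<circ> p) has_field_derivative inner (z - x) g) (at 0 within {0..1})"
    by (simp add: o_def has_field_derivative_def mult_commute_abs)
  then show ?thesis
    by (simp add: has_field_derivative_iff at_within_Icc_at_right p_def)
qed

lemma convex_on_gradient_inequality:
  fixes h :: "'a::real_inner \<Rightarrow> real"
  assumes "convex_on S h"
    and "(h has_derivative (\<lambda>u. inner u g)) (at x within S)"
    and "x \<in> S" and "z \<in> S"
  shows "h x + inner (z - x) g \<le> h z"
proof -
  have "inner (z - x) g \<le> h z - h x"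
  proof (rule tendsto_upperbound[OF difference_quotient_tendsto_inner])
    have "(h (x + t *\<^sub>R (z - x)) - h x) / t \<le> h z - h x" if "0 < t" "t \<le> 1" for t
    proof -
      have "h ((1 - t) *\<^sub>R x + t *\<^sub>R z) \<le> (1 - t) * h x + t * h z"
        using convex_onD[OF assms(1)] that assms(3,4) by simp
      then have "h (x + t *\<^sub>R (z - x)) - h x \<le> t * (h z - h x)"
        by (simp add: algebra_simps)
      then show ?thesis using that by (simp add: divide_le_eq mult.commute)
    qed
    then show "\<forall>\<^sub>F t in at_right 0. (h (x + t *\<^sub>R (z - x)) - h x) / t \<le> h z - h x"
      unfolding eventually_at_right_field by (intro exI[of _ 1]) auto
  qed (use assms convex_on_imp_convex in auto)
  then show ?thesis by simp
qed

lemma bregman_nonneg: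
  assumes "convex_on S h"
    and "(h has_derivative (\<lambda>u. inner u (gh y))) (at y within S)"
    and "x \<in> S" and "y \<in> S"
  shows "0 \<le> bregman h gh x y"
  using convex_on_gradient_inequality[OF assms(1,2,4,3)]
  by (simp add: bregman_def inner_commute)

lemma bregman_three_point:
  "inner (gh a - gh b) (c - a) = bregman h gh c b - bregman h gh c a - bregman h gh a b"
  unfolding bregman_def by (simp add: algebra_simps)

lemma bregman_prox_first_order:
  fixes \<psi> h :: "'a::real_inner \<Rightarrow> real"
  assumes "convex S" and "concave_on S \<psi>"
    and hd: "(h has_derivative (\<lambda>u. inner u (gh x))) (at x within S)"
    and "c > 0" and "x \<in> S" and "z \<in> S"
    and max: "\<And>\<mu>. \<mu> \<in> S \<Longrightarrow> \<psi> \<mu> - c * bregman h gh \<mu> y \<le> \<psi> x - c * bregman h gh x y"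
  shows "\<psi> z - \<psi> x \<le> c * inner (gh x - gh y) (z - x)"
proof -
  define q where "q = (\<psi> z - \<psi> x) / c + inner (gh y) (z - x)"
  have "q \<le> inner (z - x) (gh x)"
  proof (rule tendsto_lowerbound[OF difference_quotient_tendsto_inner[OF hd assms(1,5,6)]])
    have "q \<le> (h (x + t *\<^sub>R (z - x)) - h x) / t" if t: "0 < t" "t \<le> 1" for t
    proof -
      define xt where "xt = x + t *\<^sub>R (z - x)"
      have xt_comb: "xt = (1 - t) *\<^sub>R x + t *\<^sub>R z" by (simp add: xt_def algebra_simps)
      have "xt \<in> S" using assms(1,5,6) t unfolding xt_comb by (simp add: convex_alt)
      then have "\<psi> xt - \<psi> x \<le> c * (bregman h gh xt y - bregman h gh x y)"
        using max by (simp add: algebra_simps)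
      also have "bregman h gh xt y - bregman h gh x y = h xt - h x - t * inner (gh y) (z - x)"
        unfolding bregman_def xt_def by (simp add: algebra_simps)
      finally have "\<psi> xt - \<psi> x \<le> c * (h xt - h x - t * inner (gh y) (z - x))" .
      moreover have "(1 - t) * \<psi> x + t * \<psi> z \<le> \<psi> xt"
        unfolding xt_comb using concave_onD[OF assms(2)] t assms(5,6) by simp
      ultimately have "t * (\<psi> z - \<psi> x) \<le> c * (h xt - h x - t * inner (gh y) (z - x))"
        by (simp add: algebra_simps)
      then have "t * q \<le> h xt - h x"
        using \<open>c > 0\<close> by (simp add: q_def field_simps)
      then show ?thesis using t by (simp add: xt_def le_divide_eq mult.commute)
    qed
    then show "\<forall>\<^sub>F t in at_right 0. q \<le> (h (x + t *\<^sub>R (z - x)) - h x) / t"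
      unfolding eventually_at_right_field by (intro exI[of _ 1]) auto
  qed simp
  moreover have "inner (gh x - gh y) (z - x) = inner (z - x) (gh x) - inner (gh y) (z - x)"
    by (metis inner_commute inner_diff_left)
  ultimately have "(\<psi> z - \<psi> x) / c \<le> inner (gh x - gh y) (z - x)"
    unfolding q_def by linarith
  then show ?thesis
    using \<open>c > 0\<close> by (simp add: divide_le_eq mult.commute)
qed

lemma bregman_prox_three_point:
  fixes \<psi> h :: "'a::real_inner \<Rightarrow> real"
  assumes "convex S" and "concave_on S \<psi>"
    and "(h has_derivative (\<lambda>u. inner u (gh x))) (at x within S)"
    and "c > 0" and "x \<in> S" and "z \<in> S"
    and "\<And>\<mu>. \<mu> \<in> S \<Longrightarrow> \<psi> \<mu> - c * bregman h gh \<mu> y \<le> \<psi> x - c * bregman h gh x y"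
  shows "\<psi> z - c * bregman h gh z y \<le> \<psi> x - c * bregman h gh x y - c * bregman h gh z x"
  using bregman_prox_first_order[OF assms]
  unfolding bregman_three_point[of gh x y z h] by (simp add: algebra_simps)

locale acc_bpp3 =
  fixes Lam :: "'a::real_inner set"
    and d h :: "'a \<Rightarrow> real"
    and gh :: "'a \<Rightarrow> 'a"
    and G :: real
    and lam v y :: "nat \<Rightarrow> 'a"
    and theta eta :: "nat \<Rightarrow> real"
  assumes convex_Lam: "convex Lam"
    and concave_d: "concave_on Lam d"
    and convex_h: "convex_on Lam h"
    and h_grad: "\<And>x. x \<in> Lam \<Longrightarrow> (h has_derivative (\<lambda>u. inner u (gh x))) (at x within Lam)"
    and G_ge_1: "G \<ge> 1"
    and triangle_scaling: "\<And>l l1 l2 t. l \<in> Lam \<Longrightarrow> l1 \<in> Lam \<Longrightarrow> l2 \<in> Lam \<Longrightarrow> 0 \<le> t \<Longrightarrow> t \<le> 1 \<Longrightarrow>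
        bregman h gh ((1 - t) *\<^sub>R l + t *\<^sub>R l1) ((1 - t) *\<^sub>R l + t *\<^sub>R l2) \<le> G * t\<^sup>2 * bregman h gh l1 l2"
    and lam_0_in: "lam 0 \<in> Lam"
    and v_0: "v 0 = lam 0"
    and theta_0: "theta 0 = 1"
    and eta_pos: "\<And>k. eta k > 0"
    and theta_pos: "\<And>k. 0 < theta k"
    and theta_le_1: "\<And>k. theta k \<le> 1"
    and theta_rec: "\<And>k. eta k / (theta k)\<^sup>2 = eta (Suc k) / (theta (Suc k))\<^sup>2 - eta (Suc k) / theta (Suc k)"
    and y_eq: "\<And>k. y k = theta k *\<^sub>R v k + (1 - theta k) *\<^sub>R lam k"
    and lam_Suc_in: "\<And>k. lam (Suc k) \<in> Lam"
    and lam_Suc_argmax: "\<And>k \<mu>. \<mu> \<in> Lam \<Longrightarrow>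
        d \<mu> - bregman h gh \<mu> (y k) / eta k \<le> d (lam (Suc k)) - bregman h gh (lam (Suc k)) (y k) / eta k"
    and v_Suc_in: "\<And>k. v (Suc k) \<in> Lam"
    and v_Suc_argmax: "\<And>k \<mu>. \<mu> \<in> Lam \<Longrightarrow>
           - G * bregman h gh \<mu> (lam 0)
             + (\<Sum>j\<le>k. eta j / theta j * (d (lam (Suc j))
                  + (1 / eta j) * inner (gh (lam (Suc j)) - gh (y j)) (\<mu> - lam (Suc j))))
         \<le> - G * bregman h gh (v (Suc k)) (lam 0)
             + (\<Sum>j\<le>k. eta j / theta j * (d (lam (Suc j))
                  + (1 / eta j) * inner (gh (lam (Suc j)) - gh (y j)) (v (Suc k) - lam (Suc j))))"
begin

definition linear_model :: "nat \<Rightarrow> 'a \<Rightarrow> real" where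
  "linear_model j \<mu> = d (lam (Suc j)) + (1 / eta j) * inner (gh (lam (Suc j)) - gh (y j)) (\<mu> - lam (Suc j))"

definition weight_sum :: "nat \<Rightarrow> real" where
  "weight_sum k = (\<Sum>j\<le>k. eta j / theta j)"

definition linear_model_sum :: "nat \<Rightarrow> 'a \<Rightarrow> real" where
  "linear_model_sum k \<mu> = (\<Sum>j\<le>k. eta j / theta j * linear_model j \<mu>)"

lemma weight_sum_eq: "weight_sum k = eta k / (theta k)\<^sup>2"
proof (induction k)
  case 0
  then show ?case by (simp add: weight_sum_def theta_0)
next
  case (Suc k)
  then show ?case using theta_rec[of k] by (simp add: weight_sum_def)
qed

lemma weight_sum_pos: "weight_sum k > 0"
  unfolding weight_sum_eq using eta_pos[of k] theta_pos[of k] by simp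

lemma weight_sum_Suc:
  "weight_sum k = (1 - theta (Suc k)) * weight_sum (Suc k)"
  "eta (Suc k) / theta (Suc k) = theta (Suc k) * weight_sum (Suc k)"
  "(theta (Suc k))\<^sup>2 * weight_sum (Suc k) = eta (Suc k)"
  using theta_rec[of k] theta_pos[of "Suc k"]
  by (simp_all add: weight_sum_eq field_simps power2_eq_square)

lemma lam_in: "lam k \<in> Lam"
  using lam_0_in lam_Suc_in by (cases k) auto

lemma v_in: "v k \<in> Lam"
  using lam_0_in v_0 v_Suc_in by (cases k) auto

lemma y_in: "y k \<in> Lam"
proof -
  have "y k = (1 - theta k) *\<^sub>R lam k + theta k *\<^sub>R v k" using y_eq[of k] by simp
  then show ?thesis
    using convex_Lam lam_in v_in theta_pos[of k] theta_le_1[of k] by (simp add: convex_alt)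
qed

lemma bregman_nonneg_Lam:
  assumes "a \<in> Lam" and "b \<in> Lam"
  shows "0 \<le> bregman h gh a b"
  using bregman_nonneg[where gh = gh, OF convex_h h_grad[OF assms(2)] assms] .

lemma d_le_linear_model:
  assumes "\<mu> \<in> Lam"
  shows "d \<mu> \<le> linear_model j \<mu>"
proof -
  have "d \<mu> - d (lam (Suc j)) \<le> 1 / eta j * inner (gh (lam (Suc j)) - gh (y j)) (\<mu> - lam (Suc j))"
  proof (rule bregman_prox_first_order[where x = "lam (Suc j)" and gh = gh,
        OF convex_Lam concave_d h_grad[OF lam_Suc_in]])
    show "\<nu> \<in> Lam \<Longrightarrow> d \<nu> - 1 / eta j * bregman h gh \<nu> (y j)
        \<le> d (lam (Suc j)) - 1 / eta j * bregman h gh (lam (Suc j)) (y j)" for \<nu>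
      using lam_Suc_argmax[of \<nu> j] by simp
  qed (use eta_pos[of j] lam_Suc_in assms in auto)
  then show ?thesis by (simp add: linear_model_def)
qed

lemma linear_model_le_bregman:
  assumes "\<mu> \<in> Lam"
  shows "linear_model j \<mu> \<le> d (lam (Suc j)) + bregman h gh \<mu> (y j) / eta j"
proof -
  have "inner (gh (lam (Suc j)) - gh (y j)) (\<mu> - lam (Suc j)) \<le> bregman h gh \<mu> (y j)"
    unfolding bregman_three_point[of gh "lam (Suc j)" "y j" \<mu> h]
    using bregman_nonneg_Lam[OF assms lam_Suc_in[of j]] bregman_nonneg_Lam[OF lam_Suc_in[of j] y_in[of j]]
    by simp
  then show ?thesis
    using eta_pos[of j] by (simp add: linear_model_def divide_right_mono)
qed

lemma linear_model_convex_comb: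
  "linear_model j ((1 - t) *\<^sub>R a + t *\<^sub>R b) = (1 - t) * linear_model j a + t * linear_model j b"
proof -
  define p where "p = lam (Suc j)"
  define g where "g = gh p - gh (y j)"
  have "(1 - t) *\<^sub>R a + t *\<^sub>R b - p = (1 - t) *\<^sub>R (a - p) + t *\<^sub>R (b - p)"
    by (simp add: algebra_simps)
  then have comb: "inner g ((1 - t) *\<^sub>R a + t *\<^sub>R b - p) = (1 - t) * inner g (a - p) + t * inner g (b - p)"
    by (simp only: inner_add_right inner_scaleR_right)
  show ?thesis
    unfolding linear_model_def p_def[symmetric] g_def[symmetric] comb
    by (simp add: algebra_simps diff_divide_distrib)
qed

lemma linear_model_sum_convex_comb:
  "linear_model_sum k ((1 - t) *\<^sub>R a + t *\<^sub>R b) = (1 - t) * linear_model_sum k a + t * linear_model_sum k b"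
  unfolding linear_model_sum_def linear_model_convex_comb sum_distrib_left sum.distrib[symmetric]
  by (rule sum.cong) (simp_all add: add_divide_distrib[symmetric] algebra_simps)

lemma concave_on_linear_model_sum: "concave_on Lam (linear_model_sum k)"
  unfolding concave_on_iff
proof (intro conjI convex_Lam ballI allI impI)
  fix a b and u w :: real assume "u + w = 1"
  then show "u * linear_model_sum k a + w * linear_model_sum k b \<le> linear_model_sum k (u *\<^sub>R a + w *\<^sub>R b)"
    using linear_model_sum_convex_comb[of k w a b] by (simp add: eq_diff_eq[symmetric])
qed

lemma v_Suc_three_point:
  assumes "\<mu> \<in> Lam"
  shows "- G * bregman h gh \<mu> (lam 0) + linear_model_sum k \<mu>
    \<le> - G * bregman h gh (v (Suc k)) (lam 0) + linear_model_sum k (v (Suc k)) - G * bregman h gh \<mu> (v (Suc k))"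
proof -
  have "linear_model_sum k \<mu> - G * bregman h gh \<mu> (lam 0) \<le> linear_model_sum k (v (Suc k)) - G * bregman h gh (v (Suc k)) (lam 0)"
    if "\<mu> \<in> Lam" for \<mu>
    using v_Suc_argmax[OF that, of k] by (simp add: linear_model_sum_def linear_model_def)
  from bregman_prox_three_point[where x = "v (Suc k)" and gh = gh,
      OF convex_Lam concave_on_linear_model_sum h_grad[OF v_Suc_in] _
      v_Suc_in assms this]
  show ?thesis using G_ge_1 by simp
qed

lemma potential_base:
  assumes "\<mu> \<in> Lam"
  shows "- G * bregman h gh \<mu> (lam 0) + linear_model_sum 0 \<mu> \<le> weight_sum 0 * d (lam (Suc 0))"
proof -
  have "y 0 = lam 0" using y_eq[of 0] theta_0 v_0 by simp
  have "linear_model_sum 0 \<mu> = eta 0 * linear_model 0 \<mu>" by (simp add: linear_model_sum_def theta_0)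
  also have "\<dots> \<le> eta 0 * (d (lam (Suc 0)) + bregman h gh \<mu> (lam 0) / eta 0)"
    using linear_model_le_bregman[OF assms, of 0] eta_pos[of 0] \<open>y 0 = lam 0\<close> by simp
  also have "\<dots> = weight_sum 0 * d (lam (Suc 0)) + bregman h gh \<mu> (lam 0)"
    using eta_pos[of 0] by (simp add: weight_sum_def theta_0 field_simps)
  also have "\<dots> \<le> weight_sum 0 * d (lam (Suc 0)) + G * bregman h gh \<mu> (lam 0)"
    using G_ge_1 bregman_nonneg_Lam[OF assms lam_0_in] by (simp add: mult_le_cancel_right1)
  finally show ?thesis by simp
qed

lemma potential_step:
  assumes IH: "\<And>\<mu>. \<mu> \<in> Lam \<Longrightarrow>
      - G * bregman h gh \<mu> (lam 0) + linear_model_sum k \<mu> \<le> weight_sum k * d (lam (Suc k))"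
    and "\<mu> \<in> Lam"
  shows "- G * bregman h gh \<mu> (lam 0) + linear_model_sum (Suc k) \<mu> \<le> weight_sum (Suc k) * d (lam (Suc (Suc k)))"
proof -
  define \<theta> S lk vk where "\<theta> = theta (Suc k)" and "S = weight_sum (Suc k)"
    and "lk = lam (Suc k)" and "vk = v (Suc k)"
  define z where "z = (1 - \<theta>) *\<^sub>R lk + \<theta> *\<^sub>R \<mu>"
  have \<theta>: "0 < \<theta>" "\<theta> \<le> 1" unfolding \<theta>_def using theta_pos theta_le_1 by auto
  have "S > 0" unfolding S_def by (rule weight_sum_pos)
  have "lk \<in> Lam" "vk \<in> Lam" unfolding lk_def vk_def by (rule lam_in v_in)+
  have "z \<in> Lam" unfolding z_def using convex_Lam \<open>lk \<in> Lam\<close> \<open>\<mu> \<in> Lam\<close> \<theta> by (simp add: convex_alt)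
  have y_Suc: "y (Suc k) = (1 - \<theta>) *\<^sub>R lk + \<theta> *\<^sub>R vk"
    using y_eq[of "Suc k"] by (simp add: \<theta>_def lk_def vk_def)
  have "- G * bregman h gh \<mu> (lam 0) + linear_model_sum (Suc k) \<mu>
      = (- G * bregman h gh \<mu> (lam 0) + linear_model_sum k \<mu>) + \<theta> * S * linear_model (Suc k) \<mu>"
    by (simp add: linear_model_sum_def \<theta>_def S_def weight_sum_Suc(2)[symmetric])
  also have "\<dots> \<le> (weight_sum k * d lk - G * bregman h gh \<mu> vk) + \<theta> * S * linear_model (Suc k) \<mu>"
    using v_Suc_three_point[OF \<open>\<mu> \<in> Lam\<close>, of k] IH[OF v_in[of "Suc k"]] by (simp add: lk_def vk_def)
  also have "\<dots> \<le> ((1 - \<theta>) * S * linear_model (Suc k) lk - G * bregman h gh \<mu> vk) + \<theta> * S * linear_model (Suc k) \<mu>"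
    using mult_left_mono[OF d_le_linear_model[OF \<open>lk \<in> Lam\<close>, of "Suc k"], of "(1 - \<theta>) * S"]
      weight_sum_Suc(1)[of k] \<theta> \<open>S > 0\<close> by (simp add: \<theta>_def S_def mult.assoc)
  also have "\<dots> = S * linear_model (Suc k) z - G * bregman h gh \<mu> vk"
    unfolding z_def linear_model_convex_comb by (simp add: algebra_simps)
  also have "\<dots> \<le> S * (d (lam (Suc (Suc k))) + bregman h gh z (y (Suc k)) / eta (Suc k))
      - G * bregman h gh \<mu> vk"
    using mult_left_mono[OF linear_model_le_bregman[OF \<open>z \<in> Lam\<close>]] \<open>S > 0\<close> by simp
  also have "\<dots> \<le> S * (d (lam (Suc (Suc k))) + G * \<theta>\<^sup>2 * bregman h gh \<mu> vk / eta (Suc k))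
      - G * bregman h gh \<mu> vk"
    using triangle_scaling[OF \<open>lk \<in> Lam\<close> \<open>\<mu> \<in> Lam\<close> \<open>vk \<in> Lam\<close>] \<theta> \<open>S > 0\<close> eta_pos[of "Suc k"]
    unfolding y_Suc z_def by (simp add: divide_right_mono)
  also have "\<dots> = S * d (lam (Suc (Suc k)))"
    using weight_sum_Suc(3)[of k] eta_pos[of "Suc k"]
    by (simp add: \<theta>_def S_def field_simps)
  finally show ?thesis unfolding S_def .
qed

lemma potential_bound:
  "\<mu> \<in> Lam \<Longrightarrow> - G * bregman h gh \<mu> (lam 0) + linear_model_sum k \<mu> \<le> weight_sum k * d (lam (Suc k))"
proof (induction k arbitrary: \<mu>)
  case 0
  then show ?case by (rule potential_base)
next
  case (Suc k)
  then show ?case by (rule potential_step)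
qed

lemma weight_sum_mult_le_linear_model_sum: "\<mu> \<in> Lam \<Longrightarrow> weight_sum k * d \<mu> \<le> linear_model_sum k \<mu>"
  unfolding weight_sum_def linear_model_sum_def sum_distrib_right
  using d_le_linear_model eta_pos theta_pos by (intro sum_mono mult_left_mono) (auto intro: less_imp_le)

theorem convergence_rate:
  assumes "\<mu> \<in> Lam"
  shows "d \<mu> - d (lam (Suc k)) \<le> G * bregman h gh \<mu> (lam 0) / weight_sum k"
proof -
  have "weight_sum k * (d \<mu> - d (lam (Suc k))) \<le> G * bregman h gh \<mu> (lam 0)"
    using weight_sum_mult_le_linear_model_sum[OF assms, of k] potential_bound[OF assms, of k]
    by (simp add: right_diff_distrib)
  then show ?thesis
    using weight_sum_pos[of k] by (simp add: le_divide_eq mult.commute)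
qed

end

theorem mainTheorem8:
  fixes Lam :: "(real^'m) set"
    and d h :: "real^'m \<Rightarrow> real"
    and gh :: "real^'m \<Rightarrow> real^'m"
    and G :: real
    and lam v y :: "nat \<Rightarrow> real^'m"
    and theta eta :: "nat \<Rightarrow> real"
  assumes closedL: "closed Lam" and convexL: "convex Lam"
    and concd: "concave_on Lam d"
    and hstrict: "strictly_convex_on Lam h"
    and hgrad: "\<And>x. x \<in> Lam \<Longrightarrow> (h has_derivative (\<lambda>u. inner u (gh x))) (at x within Lam)"
    and hcont: "continuous_on Lam gh"
    and G1: "G \<ge> 1"
    and tsp: "\<And>l l1 l2 t. l \<in> Lam \<Longrightarrow> l1 \<in> Lam \<Longrightarrow> l2 \<in> Lam \<Longrightarrow> 0 \<le> t \<Longrightarrow> t \<le> 1 \<Longrightarrow>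
        bregman h gh ((1 - t) *\<^sub>R l + t *\<^sub>R l1) ((1 - t) *\<^sub>R l + t *\<^sub>R l2) \<le> G * t\<^sup>2 * bregman h gh l1 l2"
    and lam0: "lam 0 \<in> Lam"
    and v0: "v 0 = lam 0"
    and theta0: "theta 0 = 1"
    and eta_pos: "\<And>k. eta k > 0"
    and theta_rng: "\<And>k. 0 < theta k \<and> theta k \<le> 1"
    and theta_rec: "\<And>k. eta k / (theta k)\<^sup>2 = eta (Suc k) / (theta (Suc k))\<^sup>2 - eta (Suc k) / theta (Suc k)"
    and y_def: "\<And>k. y k = theta k *\<^sub>R v k + (1 - theta k) *\<^sub>R lam k"
    and lam_step: "\<And>k. lam (Suc k) \<in> Lam \<and>
        (\<forall>\<mu>\<in>Lam. d \<mu> - bregman h gh \<mu> (y k) / eta k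
                 \<le> d (lam (Suc k)) - bregman h gh (lam (Suc k)) (y k) / eta k)"
    and v_step: "\<And>k. v (Suc k) \<in> Lam \<and>
        (\<forall>\<mu>\<in>Lam.
           - G * bregman h gh \<mu> (lam 0)
             + (\<Sum>j\<le>k. eta j / theta j * (d (lam (Suc j))
                  + (1 / eta j) * inner (gh (lam (Suc j)) - gh (y j)) (\<mu> - lam (Suc j))))
         \<le> - G * bregman h gh (v (Suc k)) (lam 0)
             + (\<Sum>j\<le>k. eta j / theta j * (d (lam (Suc j))
                  + (1 / eta j) * inner (gh (lam (Suc j)) - gh (y j)) (v (Suc k) - lam (Suc j)))))"
  shows "\<forall>k. \<forall>\<mu>\<in>Lam.
           d \<mu> - d (lam (Suc k)) \<le> G * bregman h gh \<mu> (lam 0) / (\<Sum>j\<le>k. eta j / theta j)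
         \<and> G * bregman h gh \<mu> (lam 0) / (\<Sum>j\<le>k. eta j / theta j)
             = (theta k)\<^sup>2 * G * bregman h gh \<mu> (lam 0) / eta k"
proof -
  \<comment> \<open>Closedness of Lam and continuity of gh only matter for the existence of the maximizers, which is assumed.\<close>
  interpret acc_bpp3 Lam d h gh G lam v y theta eta
  proof
    show "convex_on Lam h" by (rule strictly_convex_on_imp_convex_on[OF hstrict convexL])
    show "0 < theta k" "theta k \<le> 1" for k using theta_rng[of k] by simp_all
    show "lam (Suc k) \<in> Lam" "v (Suc k) \<in> Lam" for k using lam_step[of k] v_step[of k] by simp_all
  qed (rule convexL concd hgrad G1 tsp lam0 v0 theta0 eta_pos theta_rec y_def; assumption
      | use lam_step v_step in blast)+
  show ?thesis
  proof (intro allI ballI conjI)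
    fix k and \<mu> assume "\<mu> \<in> Lam"
    show "d \<mu> - d (lam (Suc k)) \<le> G * bregman h gh \<mu> (lam 0) / (\<Sum>j\<le>k. eta j / theta j)"
      using convergence_rate[OF \<open>\<mu> \<in> Lam\<close>] by (simp add: weight_sum_def)
    show "G * bregman h gh \<mu> (lam 0) / (\<Sum>j\<le>k. eta j / theta j)
        = (theta k)\<^sup>2 * G * bregman h gh \<mu> (lam 0) / eta k"
      using weight_sum_eq[of k] eta_pos[of k] theta_pos[of k] by (simp add: weight_sum_def)
  qed
qed

end
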